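(* Let $B$ be an admissible Banach sequence space, $X$ a Banach space, $\|\cdot\|_m$ ($m\in\mathbb Z$) norms on $X$ each equivalent to the norm of $X$, and $(A_m)_{m\in\mathbb Z}$ a sequence of bounded linear operators on $X$. If $(A_m)_{m\in\mathbb Z}$ admits an exponential dichotomy with respect to the sequence of norms $\|\cdot\|_m$, then the operator $T_B\colon\mathcal D(T_B)\to Y_B$ is bijective (invertible).
   Context: Banach sequence spaces: let $\mathcal S$ be the set of real sequences $(s_n)_{n\in\mathbb Z}$. A linear subspace $B\subset\mathcal S$ with norm $\|\cdot\|_B$ is a normed sequence space if $\mathbf{s}'\in B$ and $|s_n|\le|s'_n|$ for all $n$ imply $\mathbf{s}\in B$ and $\|\mathbf{s}\|_B\le\|\mathbf{s}'\|_B$; it is a Banach sequence space if complete. It is admissible if (i) $\chi_{\{n\}}\in B$ and $\|\chi_{\{n\}}\|_B>0$ for all $n\in\mathbb Z$; (ii) for all $\mathbf{s}\in B$, $m\in\mathbb Z$ the shift $(s_{n+m})_n$ is in $B$ with norm at most $N\|\mathbf{s}\|_B$ for a fixed $N>0$. $Y_B$ is the space of sequences $\mathbf{x}=(x_n)_{n\in\mathbb Z}$ in $X$ with $(\|x_n\|_n)_n\in B$, normed by $\|\mathbf{x}\|_{Y_B}=\|(\|x_n\|_n)_n\|_B$. $T_B$ is defined by $(T_B\mathbf{x})_n=x_n-A_{n-1}x_{n-1}$ on the domain $\mathcal D(T_B)=\{\mathbf{x}\in Y_B: T_B\mathbf{x}\in Y_B\}$. Set $\mathcal A(n,m)=A_{n-1}\cdots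 A_m$ for $n>m$ and $\mathcal A(m,m)=\mathrm{Id}$. The sequence $(A_m)$ admits an exponential dichotomy with respect to the norms $\|\cdot\|_m$ if: (1) there are projections $P_m\colon X\to X$ with $A_mP_m=P_{m+1}A_m$ for all $m$, such that each $A_m|_{\ker P_m}\colon\ker P_m\to\ker P_{m+1}$ is invertible; (2) there are constants $D>0$ and $0<\lambda<1<\mu$ such that for all $x\in X$, $\|\mathcal A(n,m)P_mx\|_n\le D\lambda^{n-m}\|x\|_m$ for $n\ge m$, and $\|\mathcal A(n,m)Q_mx\|_n\le D\mu^{n-m}\|x\|_m$ for $n\le m$, where $Q_m=\mathrm{Id}-P_m$ and, for $n<m$, $\mathcal A(n,m)=(\mathcal A(m,n)|_{\ker P_n})^{-1}\colon\ker P_m\to\ker P_n$. *)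

theory Defs
  imports "HOL-Analysis.Analysis"
begin

definition banach_seq_space :: "(int \<Rightarrow> real) set \<Rightarrow> ((int \<Rightarrow> real) \<Rightarrow> real) \<Rightarrow> bool" where
  "banach_seq_space B nB \<longleftrightarrow>
     \<comment> \<open>linear subspace\<close>
     (\<lambda>n. 0) \<in> B \<and>
     (\<forall>s\<in>B. \<forall>t\<in>B. (\<lambda>n. s n + t n) \<in> B) \<and>
     (\<forall>s\<in>B. \<forall>c::real. (\<lambda>n. c * s n) \<in> B) \<and>
     \<comment> \<open>norm on B\<close>
     (\<forall>s\<in>B. 0 \<le> nB s) \<and>
     (\<forall>s\<in>B. nB s = 0 \<longleftrightarrow> s = (\<lambda>n. 0)) \<and>
     (\<forall>s\<in>B. \<forall>t\<in>B. nB (\<lambda>n. s n + t n) \<le> nB s + nB t) \<and>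
     (\<forall>s\<in>B. \<forall>c::real. nB (\<lambda>n. c * s n) = \<bar>c\<bar> * nB s) \<and>
     \<comment> \<open>solidity (normed sequence space)\<close>
     (\<forall>s t. t \<in> B \<and> (\<forall>n. \<bar>s n\<bar> \<le> \<bar>t n\<bar>) \<longrightarrow> s \<in> B \<and> nB s \<le> nB t) \<and>
     \<comment> \<open>completeness\<close>
     (\<forall>f :: nat \<Rightarrow> int \<Rightarrow> real.
        (\<forall>k. f k \<in> B) \<and> (\<forall>e>0. \<exists>N. \<forall>i\<ge>N. \<forall>j\<ge>N. nB (\<lambda>n. f i n - f j n) < e)
        \<longrightarrow> (\<exists>s\<in>B. (\<lambda>k. nB (\<lambda>n. f k n - s n)) \<longlonglongrightarrow> 0))"

definition admissible :: "(int \<Rightarrow> real) set \<Rightarrow> ((int \<Rightarrow> real) \<Rightarrow> real) \<Rightarrow> bool" where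
  "admissible B nB \<longleftrightarrow>
     (\<forall>n::int. (\<lambda>k. if k = n then 1 else 0) \<in> B \<and> nB (\<lambda>k. if k = n then 1 else 0) > 0) \<and>
     (\<exists>N>0. \<forall>s\<in>B. \<forall>m::int. (\<lambda>n. s (n + m)) \<in> B \<and> nB (\<lambda>n. s (n + m)) \<le> N * nB s)"

definition equiv_norm :: "('a::real_normed_vector \<Rightarrow> real) \<Rightarrow> bool" where
  "equiv_norm nm \<longleftrightarrow>
     (\<forall>x y. nm (x + y) \<le> nm x + nm y) \<and>
     (\<forall>c x. nm (c *\<^sub>R x) = \<bar>c\<bar> * nm x) \<and>
     (\<forall>x. 0 \<le> nm x) \<and> (\<forall>x. nm x = 0 \<longleftrightarrow> x = 0) \<and>
     (\<exists>c C. 0 < c \<and> 0 < C \<and> (\<forall>x. c * norm x \<le> nm x \<and> nm x \<le> C * norm x))"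

definition YB :: "(int \<Rightarrow> real) set \<Rightarrow> (int \<Rightarrow> 'a \<Rightarrow> real) \<Rightarrow> (int \<Rightarrow> 'a) set" where
  "YB B nrm = {x. (\<lambda>n. nrm n (x n)) \<in> B}"

definition normYB :: "((int \<Rightarrow> real) \<Rightarrow> real) \<Rightarrow> (int \<Rightarrow> 'a \<Rightarrow> real) \<Rightarrow> (int \<Rightarrow> 'a) \<Rightarrow> real" where
  "normYB nB nrm x = nB (\<lambda>n. nrm n (x n))"

definition TB :: "(int \<Rightarrow> 'a::real_vector \<Rightarrow> 'a) \<Rightarrow> (int \<Rightarrow> 'a) \<Rightarrow> (int \<Rightarrow> 'a)" where
  "TB A x = (\<lambda>n. x n - A (n - 1) (x (n - 1)))"

definition domTB :: "(int \<Rightarrow> real) set \<Rightarrow> (int \<Rightarrow> 'a \<Rightarrow> real) \<Rightarrow> (int \<Rightarrow> 'a::real_vector \<Rightarrow> 'a) \<Rightarrow> (int \<Rightarrow> 'a) set" where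
  "domTB B nrm A = {x \<in> YB B nrm. TB A x \<in> YB B nrm}"

text \<open>Cocycle: cocyc A m k = A(m+k-1) \<circ> ... \<circ> A(m), i.e. \<A>(m+k, m).\<close>

fun cocyc :: "(int \<Rightarrow> 'a \<Rightarrow> 'a) \<Rightarrow> int \<Rightarrow> nat \<Rightarrow> 'a \<Rightarrow> 'a" where
  "cocyc A m 0 = id"
| "cocyc A m (Suc k) = A (m + int k) \<circ> cocyc A m k"

definition evol :: "(int \<Rightarrow> 'a \<Rightarrow> 'a) \<Rightarrow> int \<Rightarrow> int \<Rightarrow> 'a \<Rightarrow> 'a" where
  "evol A n m = cocyc A m (nat (n - m))"

text \<open>\<A>(n,m) on ker P_m for n \<le> m: inverse of \<A>(m,n) restricted to ker P_n.\<close>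
definition evol_back :: "(int \<Rightarrow> 'a \<Rightarrow> 'a) \<Rightarrow> (int \<Rightarrow> 'a \<Rightarrow> 'a::real_vector) \<Rightarrow> int \<Rightarrow> int \<Rightarrow> 'a \<Rightarrow> 'a" where
  "evol_back A P n m = inv_into {y. P n y = 0} (evol A m n)"

definition exp_dichotomy :: "(int \<Rightarrow> 'a::real_normed_vector \<Rightarrow> 'a) \<Rightarrow> (int \<Rightarrow> 'a \<Rightarrow> real) \<Rightarrow> bool" where
  "exp_dichotomy A nrm \<longleftrightarrow>
    (\<exists>P :: int \<Rightarrow> 'a \<Rightarrow> 'a.
       (\<forall>m. bounded_linear (P m) \<and> P m \<circ> P m = P m) \<and>
       (\<forall>m. A m \<circ> P m = P (m + 1) \<circ> A m) \<and>
       (\<forall>m. bij_betw (A m) {x. P m x = 0} {x. P (m + 1) x = 0}) \<and>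
       (\<exists>D lam mu. D > 0 \<and> 0 < lam \<and> lam < 1 \<and> 1 < mu \<and>
          (\<forall>x n m. n \<ge> m \<longrightarrow>
             nrm n (evol A n m (P m x)) \<le> D * lam powr real_of_int (n - m) * nrm m x) \<and>
          (\<forall>x n m. n \<le> m \<longrightarrow>
             nrm n (evol_back A P n m (x - P m x)) \<le> D * mu powr real_of_int (n - m) * nrm m x)))"

end

theory Submission
  imports Defs
begin

text \<open>
  Injectivity: a solution of the homogeneous equation x n = A (n - 1) (x (n - 1)) that is
  bounded in the norms nrm n vanishes. Its stable part at time m is transported from time m - j,
  so it is of size O(\<lambda>^j) for every j; dually its unstable part is O(\<mu>^-j). Elements of Y_B
  are bounded in this sense because an admissible space embeds into bounded sequences: by the
  shift bound all unit sequences have norm at least that of the unit sequence at 0, divided by N.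
  Surjectivity: the Green's function solution
  x n = \<Sum>j\<ge>0. \<A>(n, n - j) P y(n - j) - \<Sum>j\<ge>1. \<A>(n, n + j) Q y(n + j)
  is dominated termwise by geometrically weighted shifts of the sequence nrm n (y n), and a
  series of shifts with summable weights converges in the complete space B.
\<close>

subsection \<open>Admissible Banach sequence spaces\<close>

locale admissible_seq_space =
  fixes B :: "(int \<Rightarrow> real) set" and nB :: "(int \<Rightarrow> real) \<Rightarrow> real"
  assumes banach: "banach_seq_space B nB" and adm: "admissible B nB"
begin

lemma seq_zero_mem: "(\<lambda>n. 0) \<in> B"
  using banach unfolding banach_seq_space_def by blast

lemma seq_add_mem: "s \<in> B \<Longrightarrow> t \<in> B \<Longrightarrow> (\<lambda>n. s n + t n) \<in> B"
  using banach unfolding banach_seq_space_def by blast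

lemma seq_scale_mem: "s \<in> B \<Longrightarrow> (\<lambda>n. c * s n) \<in> B"
  using banach unfolding banach_seq_space_def by blast

lemma seq_norm_nonneg: "s \<in> B \<Longrightarrow> 0 \<le> nB s"
  using banach unfolding banach_seq_space_def by blast

lemma seq_norm_zero: "nB (\<lambda>n. 0) = 0"
  using banach seq_zero_mem unfolding banach_seq_space_def by blast

lemma seq_norm_triangle: "s \<in> B \<Longrightarrow> t \<in> B \<Longrightarrow> nB (\<lambda>n. s n + t n) \<le> nB s + nB t"
  using banach unfolding banach_seq_space_def by blast

lemma seq_norm_scale: "s \<in> B \<Longrightarrow> nB (\<lambda>n. c * s n) = \<bar>c\<bar> * nB s"
  using banach unfolding banach_seq_space_def by blast

lemma seq_solid: "t \<in> B \<Longrightarrow> (\<And>n. \<bar>s n\<bar> \<le> \<bar>t n\<bar>) \<Longrightarrow> s \<in> B \<and> nB s \<le> nB t"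
  using banach unfolding banach_seq_space_def by blast

lemma seq_complete:
  "(\<And>k. f k \<in> B) \<Longrightarrow> (\<forall>e>0. \<exists>M. \<forall>i\<ge>M. \<forall>j\<ge>M. nB (\<lambda>n. f i n - f j n) < e)
    \<Longrightarrow> \<exists>s\<in>B. (\<lambda>k. nB (\<lambda>n. f k n - s n)) \<longlonglongrightarrow> 0"
  using banach unfolding banach_seq_space_def by blast

lemma seq_unit_mem: "(\<lambda>k. if k = n then 1 else 0) \<in> B"
  and seq_unit_norm_pos: "nB (\<lambda>k. if k = n then 1 else 0) > 0"
  using adm unfolding admissible_def by blast+

lemma seq_shift_bound:
  obtains N where "N > 0" "\<And>s m. s \<in> B \<Longrightarrow> (\<lambda>n. s (n + m)) \<in> B \<and> nB (\<lambda>n. s (n + m)) \<le> N * nB s"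
  using adm unfolding admissible_def by blast

lemma seq_diff_mem: "s \<in> B \<Longrightarrow> t \<in> B \<Longrightarrow> (\<lambda>n. s n - t n) \<in> B"
  using seq_add_mem[of s "\<lambda>n. (-1) * t n"] seq_scale_mem[of t "-1"] by simp

lemma seq_norm_diff_commute: "s \<in> B \<Longrightarrow> t \<in> B \<Longrightarrow> nB (\<lambda>n. s n - t n) = nB (\<lambda>n. t n - s n)"
  using seq_norm_scale[OF seq_diff_mem, of t s "-1"] by simp

lemma seq_dominated_mem: "s \<in> B \<Longrightarrow> (\<And>n. 0 \<le> w n) \<Longrightarrow> (\<And>n. w n \<le> s n) \<Longrightarrow> w \<in> B"
  using seq_solid[of s w] by (smt (verit))

lemma seq_sum_mem:
  "finite S \<Longrightarrow> (\<And>l. l \<in> S \<Longrightarrow> g l \<in> B) \<Longrightarrow>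
   (\<lambda>n. \<Sum>l\<in>S. g l n) \<in> B \<and> nB (\<lambda>n. \<Sum>l\<in>S. g l n) \<le> (\<Sum>l\<in>S. nB (g l))"
proof (induction S rule: finite_induct)
  case empty
  then show ?case using seq_zero_mem seq_norm_zero by simp
next
  case (insert x F)
  then have IH: "(\<lambda>n. \<Sum>l\<in>F. g l n) \<in> B" "nB (\<lambda>n. \<Sum>l\<in>F. g l n) \<le> (\<Sum>l\<in>F. nB (g l))"
    and gx: "g x \<in> B" by auto
  show ?case
    using insert(1,2) seq_add_mem[OF gx IH(1)] seq_norm_triangle[OF gx IH(1)] IH(2) by simp
qed

text \<open>Compare |s m| times the unit sequence at m with s by solidity, and the unit sequence at 0
  with a shift of the one at m.\<close>
lemma seq_pointwise_bound:
  obtains K where "\<And>s (m::int). s \<in> B \<Longrightarrow> \<bar>s m\<bar> \<le> K * nB s"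
proof -
  obtain N where N: "N > 0" "\<And>s m. s \<in> B \<Longrightarrow> (\<lambda>n. s (n + m)) \<in> B \<and> nB (\<lambda>n. s (n + m)) \<le> N * nB s"
    using seq_shift_bound by blast
  define e :: "int \<Rightarrow> int \<Rightarrow> real" where "e = (\<lambda>m k. if k = m then 1 else 0)"
  have e_mem: "e m \<in> B" and e_pos: "nB (e m) > 0" for m
    unfolding e_def by (fact seq_unit_mem seq_unit_norm_pos)+
  have "\<bar>s m\<bar> \<le> N / nB (e 0) * nB s" if s: "s \<in> B" for s m
  proof -
    have "nB (\<lambda>k. \<bar>s m\<bar> * e m k) \<le> nB s"
      by (rule conjunct2[OF seq_solid[OF s]]) (auto simp: e_def)
    then have unit: "\<bar>s m\<bar> * nB (e m) \<le> nB s"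
      using seq_norm_scale[OF e_mem[of m], of "\<bar>s m\<bar>"] by simp
    have "(\<lambda>n. e m (n + m)) = e 0" by (auto simp: e_def)
    then have shifted: "nB (e 0) \<le> N * nB (e m)" using N(2)[OF e_mem, of m m] by simp
    have "\<bar>s m\<bar> * nB (e 0) \<le> N * (\<bar>s m\<bar> * nB (e m))"
      using mult_left_mono[OF shifted, of "\<bar>s m\<bar>"] by (simp add: ac_simps)
    also have "\<dots> \<le> N * nB s" using unit N(1) by simp
    finally show ?thesis using e_pos[of 0] by (simp add: field_simps)
  qed
  then show thesis using that by blast
qed

text \<open>The partial sums form a Cauchy sequence in \<open>B\<close> since the shift operators are uniformly
  bounded; their limit in \<open>B\<close> is also the pointwise limit by the pointwise bound.\<close>
lemma weighted_shift_series_mem: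
  assumes t: "t \<in> B" and c: "\<And>j. 0 \<le> c j" "summable c"
  shows "\<exists>s\<in>B. \<forall>n. (\<lambda>j. c j * t (n + \<sigma> j)) sums s n"
proof -
  obtain N where N: "N > 0" "\<And>s m. s \<in> B \<Longrightarrow> (\<lambda>n. s (n + m)) \<in> B \<and> nB (\<lambda>n. s (n + m)) \<le> N * nB s"
    using seq_shift_bound by blast
  obtain K where K: "\<And>s m. s \<in> B \<Longrightarrow> \<bar>s m\<bar> \<le> K * nB s"
    using seq_pointwise_bound by blast
  define g where "g = (\<lambda>l n. c l * t (n + \<sigma> l))"
  define f where "f = (\<lambda>k n. \<Sum>l<k. g l n)"
  define C where "C = N * nB t"
  have C: "0 \<le> C" using N(1) seq_norm_nonneg[OF t] by (simp add: C_def)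
  have g_mem: "g l \<in> B" for l
    unfolding g_def using N(2)[OF t, of "\<sigma> l"] by (intro seq_scale_mem) auto
  have g_norm: "nB (g l) \<le> c l * C" for l
    using seq_norm_scale[of "\<lambda>n. t (n + \<sigma> l)" "c l"] N(2)[OF t, of "\<sigma> l"] c(1)[of l]
    unfolding g_def C_def by (simp add: mult_left_mono)
  have f_mem: "f k \<in> B" for k
    unfolding f_def using seq_sum_mem[of "{..<k}" g] g_mem by auto
  have f_diff: "nB (\<lambda>n. f i n - f j n) \<le> sum c {j..<i} * C" if "j \<le> i" for i j
  proof -
    have "(\<lambda>n. f i n - f j n) = (\<lambda>n. \<Sum>l\<in>{j..<i}. g l n)"
      unfolding f_def using that by (simp add: lessThan_atLeast0 sum_diff_nat_ivl)
    moreover have "nB (\<lambda>n. \<Sum>l\<in>{j..<i}. g l n) \<le> (\<Sum>l\<in>{j..<i}. nB (g l))"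
      using seq_sum_mem[of "{j..<i}" g] g_mem by auto
    moreover have "(\<Sum>l\<in>{j..<i}. nB (g l)) \<le> (\<Sum>l\<in>{j..<i}. c l * C)"
      by (intro sum_mono g_norm)
    ultimately show ?thesis by (simp add: sum_distrib_right)
  qed
  have cauchy: "\<forall>e>0. \<exists>M. \<forall>i\<ge>M. \<forall>j\<ge>M. nB (\<lambda>n. f i n - f j n) < e"
  proof (intro allI impI)
    fix e :: real assume e: "e > 0"
    have e': "e / (C + 1) > 0" using e C by simp
    obtain M where M: "\<forall>j\<ge>M. \<forall>i. norm (sum c {j..<i}) < e / (C + 1)"
      using c(2) e' unfolding summable_Cauchy by blast
    have ordered: "nB (\<lambda>n. f i n - f j n) < e" if "M \<le> j" "j \<le> i" for i j
    proof -
      have "\<bar>sum c {j..<i}\<bar> < e / (C + 1)" using M that(1) by simp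
      then have "sum c {j..<i} < e / (C + 1)" by linarith
      then have "sum c {j..<i} * C \<le> e / (C + 1) * C" using C by (intro mult_right_mono) auto
      also have "\<dots> = e * (C / (C + 1))" by simp
      also have "\<dots> < e * 1" using C by (intro mult_strict_left_mono e) simp
      finally show ?thesis using f_diff[OF that(2)] by simp
    qed
    have "nB (\<lambda>n. f i n - f j n) < e" if "M \<le> i" "M \<le> j" for i j
    proof (cases "j \<le> i")
      case True
      then show ?thesis using ordered that by blast
    next
      case False
      then show ?thesis using ordered[of i j] that seq_norm_diff_commute[OF f_mem f_mem, of i j] by simp
    qed
    then show "\<exists>M. \<forall>i\<ge>M. \<forall>j\<ge>M. nB (\<lambda>n. f i n - f j n) < e" by blast
  qed
  obtain s where s: "s \<in> B" "(\<lambda>k. nB (\<lambda>n. f k n - s n)) \<longlonglongrightarrow> 0"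
    using seq_complete[OF f_mem cauchy] by blast
  have "(\<lambda>j. c j * t (n + \<sigma> j)) sums s n" for n
  proof -
    have bound: "norm (f k n - s n) \<le> K * nB (\<lambda>n. f k n - s n)" for k
      using K[OF seq_diff_mem[OF f_mem s(1)], where m = n] by simp
    have "(\<lambda>k. f k n - s n) \<longlonglongrightarrow> 0"
      by (rule Lim_null_comparison[OF always_eventually tendsto_mult_right_zero[OF s(2)]])
        (use bound in blast)
    then have "(\<lambda>k. f k n) \<longlonglongrightarrow> s n" by (simp only: LIM_zero_iff)
    then show ?thesis unfolding sums_def f_def g_def .
  qed
  with s(1) show ?thesis by blast
qed

end

context
  fixes nm :: "'a::real_normed_vector \<Rightarrow> real"
  assumes nm: "equiv_norm nm"
begin

lemma equiv_norm_triangle: "nm (x + y) \<le> nm x + nm y"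
  using nm unfolding equiv_norm_def by blast

lemma equiv_norm_scaleR: "nm (c *\<^sub>R x) = \<bar>c\<bar> * nm x"
  using nm unfolding equiv_norm_def by blast

lemma equiv_norm_nonneg: "0 \<le> nm x"
  using nm unfolding equiv_norm_def by blast

lemma equiv_norm_eq_0_iff: "nm x = 0 \<longleftrightarrow> x = 0"
  using nm unfolding equiv_norm_def by blast

lemma equiv_norm_minus: "nm (- x) = nm x"
  using equiv_norm_scaleR[of "-1" x] by simp

lemma equiv_norm_diff_le: "nm (x - y) \<le> nm x + nm y"
  using equiv_norm_triangle[of x "- y"] equiv_norm_minus[of y] by simp

lemma norm_le_equiv_norm: obtains c where "\<And>x. norm x \<le> c * nm x"
proof -
  obtain c where c: "0 < c" "\<And>x. c * norm x \<le> nm x"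
    using nm unfolding equiv_norm_def by blast
  have "norm x \<le> (1 / c) * nm x" for x
    using c(2)[of x] c(1) by (simp add: mult.commute pos_le_divide_eq)
  then show thesis using that by blast
qed

lemma tendsto_equiv_norm:
  assumes "X \<longlonglongrightarrow> x" shows "(\<lambda>k. nm (X k)) \<longlonglongrightarrow> nm x"
proof -
  obtain C where C: "\<And>x. nm x \<le> C * norm x"
    using nm unfolding equiv_norm_def by blast
  have lipschitz: "\<bar>nm a - nm b\<bar> \<le> C * norm (a - b)" for a b
  proof -
    have "nm a \<le> nm (a - b) + nm b" "nm b \<le> nm (b - a) + nm a"
      using equiv_norm_triangle[of "a - b" b] equiv_norm_triangle[of "b - a" a] by simp_all
    moreover have "nm (b - a) = nm (a - b)" using equiv_norm_minus[of "a - b"] by simp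
    ultimately show ?thesis using C[of "a - b"] by linarith
  qed
  have "(\<lambda>k. C * norm (X k - x)) \<longlonglongrightarrow> 0"
    using assms by (intro tendsto_mult_right_zero) (simp add: LIM_zero_iff tendsto_norm_zero)
  then have "(\<lambda>k. nm (X k) - nm x) \<longlonglongrightarrow> 0"
    by (rule Lim_null_comparison[rotated]) (use lipschitz in auto)
  then show ?thesis by (simp add: LIM_zero_iff)
qed

lemma equiv_norm_zero: "nm 0 = 0"
  using equiv_norm_eq_0_iff by blast

lemma equiv_norm_sum_le: "nm (\<Sum>j\<in>F. u j) \<le> (\<Sum>j\<in>F. nm (u j))"
proof (induction F rule: infinite_finite_induct)
  case (insert a F)
  then show ?case using equiv_norm_triangle[of "u a" "\<Sum>j\<in>F. u j"] by simp
qed (simp_all add: equiv_norm_zero)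

lemma equiv_norm_suminf_le:
  assumes u: "summable u" and g: "summable g" and le: "\<And>j. nm (u j) \<le> g j"
  shows "nm (suminf u) \<le> suminf g"
proof (rule LIMSEQ_le_const2)
  show "(\<lambda>k. nm (\<Sum>j<k. u j)) \<longlonglongrightarrow> nm (suminf u)"
    using u by (intro tendsto_equiv_norm) (simp add: summable_LIMSEQ)
  have g_nonneg: "0 \<le> g j" for j
    using le[of j] equiv_norm_nonneg[of "u j"] by linarith
  have "nm (\<Sum>j<k. u j) \<le> suminf g" for k
  proof -
    have "nm (\<Sum>j<k. u j) \<le> (\<Sum>j<k. g j)"
      using equiv_norm_sum_le[of u "{..<k}"] sum_mono[of "{..<k}" "\<lambda>j. nm (u j)" g] le
      by (meson order_trans)
    also have "\<dots> \<le> suminf g"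
      using g g_nonneg by (intro sum_le_suminf) auto
    finally show ?thesis .
  qed
  then show "\<exists>N. \<forall>k\<ge>N. nm (\<Sum>j<k. u j) \<le> suminf g" by blast
qed

end

lemma summable_equiv_norm_le:
  fixes u :: "nat \<Rightarrow> 'a::banach"
  assumes nm: "equiv_norm nm" and g: "summable g" and le: "\<And>j. nm (u j) \<le> g j"
  shows "summable u"
proof -
  obtain c where c: "\<And>x. norm x \<le> c * nm x" using norm_le_equiv_norm[OF nm] by blast
  have "summable (\<lambda>j. \<bar>c\<bar> * g j)" using g by (rule summable_mult)
  moreover have "norm (u j) \<le> \<bar>c\<bar> * g j" for j
  proof -
    have "norm (u j) \<le> \<bar>c\<bar> * nm (u j)"
      using c[of "u j"] mult_right_mono[OF abs_ge_self equiv_norm_nonneg[OF nm]] by (rule order_trans)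
    also have "\<dots> \<le> \<bar>c\<bar> * g j" by (rule mult_left_mono[OF le]) simp
    finally show ?thesis .
  qed
  ultimately show ?thesis by (rule summable_comparison_test'[where N = 0])
qed

subsection \<open>The evolution operator\<close>

lemma cocyc_Suc_right: "cocyc A m (Suc k) = cocyc A (m + 1) k \<circ> A m"
proof (induction k)
  case (Suc k)
  have "m + int (Suc k) = m + 1 + int k" by simp
  then show ?case using Suc.IH by (simp only: cocyc.simps comp_assoc)
qed simp

lemma cocyc_bounded_linear:
  assumes "\<And>m. bounded_linear (A m)" shows "bounded_linear (cocyc A m k)"
proof (induction k)
  case (Suc k)
  then show ?case using bounded_linear_compose[OF assms Suc] by (simp add: comp_def)
qed (simp add: id_def)

lemma powr_real_of_nat: "0 < x \<Longrightarrow> x powr real_of_int (int j) = x ^ j"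
  using powr_realpow[of x j] by simp

lemma powr_real_of_minus_nat: "0 < x \<Longrightarrow> x powr real_of_int (- int j) = inverse x ^ j"
  by (simp add: powr_minus powr_realpow power_inverse)

lemma nonneg_le_geometric_eq_0:
  fixes a :: real
  assumes "0 \<le> a" "0 < q" "q < 1" "\<And>j. a \<le> C * q ^ j"
  shows "a = 0"
proof -
  have "(\<lambda>j. C * q ^ j) \<longlonglongrightarrow> 0" using assms(2,3) by (intro tendsto_mult_right_zero LIMSEQ_power_zero) simp
  then have "a \<le> 0" by (rule LIMSEQ_le_const) (use assms(4) in blast)
  with assms(1) show ?thesis by simp
qed

locale dichotomy =
  fixes A :: "int \<Rightarrow> 'a::banach \<Rightarrow> 'a" and P :: "int \<Rightarrow> 'a \<Rightarrow> 'a"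
    and nrm :: "int \<Rightarrow> 'a \<Rightarrow> real" and D lam mu :: real
  assumes equiv_norm: "\<And>m. equiv_norm (nrm m)"
    and A_linear: "\<And>m. bounded_linear (A m)"
    and P_linear: "\<And>m. bounded_linear (P m)"
    and P_idem: "\<And>m x. P m (P m x) = P m x"
    and A_P_commute: "\<And>m x. A m (P m x) = P (m + 1) (A m x)"
    and A_bij_ker: "\<And>m. bij_betw (A m) {x. P m x = 0} {x. P (m + 1) x = 0}"
    and D_pos: "0 < D" and lam_pos: "0 < lam" and lam_less_1: "lam < 1" and mu_gt_1: "1 < mu"
    and stable_bound: "\<And>x n m. m \<le> n \<Longrightarrow>
      nrm n (evol A n m (P m x)) \<le> D * lam powr real_of_int (n - m) * nrm m x"
    and unstable_bound: "\<And>x n m. n \<le> m \<Longrightarrow>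
      nrm n (evol_back A P n m (x - P m x)) \<le> D * mu powr real_of_int (n - m) * nrm m x"
begin

lemma A_diff: "A m (x - y) = A m x - A m y"
  using linear_diff[OF bounded_linear.linear[OF A_linear]] .

lemma A_zero: "A m 0 = 0"
  using linear_0[OF bounded_linear.linear[OF A_linear]] .

lemma P_diff: "P m (x - y) = P m x - P m y"
  using linear_diff[OF bounded_linear.linear[OF P_linear]] .

lemma P_complement: "P m (x - P m x) = 0"
  by (simp add: P_diff P_idem)

lemma cocyc_diff: "cocyc A m k (x - y) = cocyc A m k x - cocyc A m k y"
  using linear_diff[OF bounded_linear.linear[OF cocyc_bounded_linear[OF A_linear]]] .

lemma cocyc_P_commute: "cocyc A m k (P m x) = P (m + int k) (cocyc A m k x)"
  by (induction k) (simp_all add: A_P_commute ac_simps)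

lemma cocyc_bij_ker: "bij_betw (cocyc A m k) {x. P m x = 0} {x. P (m + int k) x = 0}"
proof (induction k)
  case (Suc k)
  have "bij_betw (A (m + int k) \<circ> cocyc A m k) {x. P m x = 0} {x. P (m + int k + 1) x = 0}"
    by (rule bij_betw_trans[OF Suc A_bij_ker])
  then show ?case by (simp add: ac_simps comp_def)
qed (auto simp: bij_betw_def)

lemma evol_add_nat: "evol A (m + int k) m = cocyc A m k"
  by (simp add: evol_def)

lemma evol_bij_ker: "n \<le> m \<Longrightarrow> bij_betw (evol A m n) {x. P n x = 0} {x. P m x = 0}"
  using cocyc_bij_ker[of n "nat (m - n)"] by (simp add: evol_def)

lemma
  assumes "n \<le> m" "P m z = 0"
  shows evol_back_ker: "P n (evol_back A P n m z) = 0"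
    and evol_evol_back: "evol A m n (evol_back A P n m z) = z"
proof -
  have z: "z \<in> evol A m n ` {x. P n x = 0}"
    using evol_bij_ker[OF assms(1)] assms(2) by (simp add: bij_betw_def)
  show "P n (evol_back A P n m z) = 0"
    using inv_into_into[OF z] unfolding evol_back_def by simp
  show "evol A m n (evol_back A P n m z) = z"
    using f_inv_into_f[OF z] unfolding evol_back_def .
qed

lemma evol_back_eqI:
  assumes "n \<le> m" "P n w = 0" "evol A m n w = z"
  shows "evol_back A P n m z = w"
  unfolding evol_back_def
  by (rule inv_into_f_eq[OF bij_betw_imp_inj_on[OF evol_bij_ker[OF assms(1)]]]) (use assms in auto)

lemma A_evol_back:
  assumes "n \<le> m" "P m z = 0"
  shows "A (n - 1) (evol_back A P (n - 1) m z) = evol_back A P n m z"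
proof (rule sym, rule evol_back_eqI[OF assms(1)])
  define w where "w = evol_back A P (n - 1) m z"
  have w: "P (n - 1) w = 0" "evol A m (n - 1) w = z"
    using evol_back_ker[of "n - 1" m z] evol_evol_back[of "n - 1" m z] assms unfolding w_def by auto
  show "P n (A (n - 1) w) = 0"
    using A_P_commute[of "n - 1" w] w(1) A_zero by simp
  have "nat (m - (n - 1)) = Suc (nat (m - n))" using assms(1) by simp
  then have "evol A m (n - 1) = cocyc A n (nat (m - n)) \<circ> A (n - 1)"
    using cocyc_Suc_right[of A "n - 1" "nat (m - n)"] by (simp add: evol_def)
  then show "evol A m n (A (n - 1) w) = z" using w(2) by (simp add: evol_def)
qed

lemma A_evol: "A (n - 1) (evol A (n - 1) (n - int (Suc j)) x) = evol A n (n - int (Suc j)) x"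
proof -
  have "nat (n - (n - int (Suc j))) = Suc j" by simp
  then have "evol A n (n - int (Suc j)) = cocyc A (n - int (Suc j)) (Suc j)"
    unfolding evol_def by (simp only:)
  moreover have "evol A (n - 1) (n - int (Suc j)) = cocyc A (n - int (Suc j)) j"
    unfolding evol_def by simp
  moreover have "n - int (Suc j) + int j = n - 1" by simp
  ultimately show ?thesis by (simp only: cocyc.simps comp_apply)
qed

end

subsection \<open>Bounded solutions of the homogeneous equation\<close>

context dichotomy
begin

context
  fixes z :: "int \<Rightarrow> 'a" and M :: real
  assumes homogeneous: "\<And>n. z n = A (n - 1) (z (n - 1))"
    and bounded: "\<And>n. nrm n (z n) \<le> M"
begin

lemma homogeneous_cocyc: "z (m + int k) = cocyc A m k (z m)"
proof (induction k)
  case (Suc k)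
  have "m + int (Suc k) - 1 = m + int k" by simp
  then have "z (m + int (Suc k)) = A (m + int k) (z (m + int k))"
    using homogeneous[of "m + int (Suc k)"] by (simp only:)
  then show ?case using Suc by simp
qed simp

lemma homogeneous_stable_part: "P m (z m) = 0"
proof -
  have "nrm m (P m (z m)) \<le> (D * M) * lam ^ j" for j
  proof -
    have "P m (z m) = evol A m (m - int j) (P (m - int j) (z (m - int j)))"
      using homogeneous_cocyc[of "m - int j" j] cocyc_P_commute[of "m - int j" j]
        evol_add_nat[of "m - int j" j] by simp
    then have "nrm m (P m (z m)) \<le> D * lam powr real_of_int (m - (m - int j)) * nrm (m - int j) (z (m - int j))"
      using stable_bound[of "m - int j" m] by simp
    also have "\<dots> \<le> D * lam ^ j * M"
      using powr_real_of_nat[OF lam_pos, of j] bounded D_pos lam_pos by (simp add: mult_left_mono)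
    finally show ?thesis by (simp add: ac_simps)
  qed
  then show ?thesis
    using nonneg_le_geometric_eq_0[OF equiv_norm_nonneg[OF equiv_norm] lam_pos lam_less_1]
      equiv_norm_eq_0_iff[OF equiv_norm] by blast
qed

lemma homogeneous_unstable_part: "z m - P m (z m) = 0"
proof -
  define w where "w = z m - P m (z m)"
  have "nrm m w \<le> (D * M) * inverse mu ^ j" for j
  proof -
    have "evol A (m + int j) m w = z (m + int j) - P (m + int j) (z (m + int j))"
      unfolding w_def evol_add_nat by (simp add: cocyc_diff cocyc_P_commute homogeneous_cocyc)
    then have "evol_back A P m (m + int j) (z (m + int j) - P (m + int j) (z (m + int j))) = w"
      by (intro evol_back_eqI) (simp_all add: w_def P_complement)
    then have "nrm m w \<le> D * mu powr real_of_int (m - (m + int j)) * nrm (m + int j) (z (m + int j))"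
      using unstable_bound[of m "m + int j" "z (m + int j)"] by simp
    also have "\<dots> \<le> D * inverse mu ^ j * M"
      using powr_real_of_minus_nat[of mu j] mu_gt_1 bounded D_pos by (simp add: mult_left_mono)
    finally show ?thesis by (simp add: ac_simps)
  qed
  moreover have "0 < inverse mu" "inverse mu < 1" using mu_gt_1 by (auto simp: inverse_less_1_iff)
  ultimately have "nrm m w = 0"
    using nonneg_le_geometric_eq_0[OF equiv_norm_nonneg[OF equiv_norm]] by blast
  then show ?thesis unfolding w_def using equiv_norm_eq_0_iff[OF equiv_norm] by blast
qed

lemma bounded_homogeneous_eq_0: "z m = 0"
  using homogeneous_stable_part[of m] homogeneous_unstable_part[of m] by simp

end

lemma TB_bounded_inj:
  assumes eq: "TB A x = TB A x'"
    and bounded: "\<And>n. nrm n (x n) \<le> M" "\<And>n. nrm n (x' n) \<le> M"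
  shows "x = x'"
proof -
  have "x n - x' n = 0" for n
  proof (rule bounded_homogeneous_eq_0)
    show "x n - x' n = A (n - 1) (x (n - 1) - x' (n - 1))" for n
      using fun_cong[OF eq, of n] by (simp add: TB_def A_diff algebra_simps)
    show "nrm n (x n - x' n) \<le> M + M" for n
      using equiv_norm_diff_le[OF equiv_norm] bounded by (meson add_mono order_trans)
  qed
  then show ?thesis by auto
qed

end

subsection \<open>The Green's function solution\<close>

context dichotomy
begin

definition stable_term :: "(int \<Rightarrow> 'a) \<Rightarrow> int \<Rightarrow> nat \<Rightarrow> 'a" where
  "stable_term y n j = evol A n (n - int j) (P (n - int j) (y (n - int j)))"

definition unstable_term :: "(int \<Rightarrow> 'a) \<Rightarrow> int \<Rightarrow> nat \<Rightarrow> 'a" where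
  "unstable_term y n j = evol_back A P n (n + int j) (y (n + int j) - P (n + int j) (y (n + int j)))"

lemma stable_term_0: "stable_term y n 0 = P n (y n)"
  by (simp add: stable_term_def evol_def)

lemma unstable_term_0: "unstable_term y n 0 = y n - P n (y n)"
  unfolding unstable_term_def by (rule evol_back_eqI) (simp_all add: P_complement evol_def)

lemma A_stable_term: "A (n - 1) (stable_term y (n - 1) j) = stable_term y n (Suc j)"
proof -
  have "n - 1 - int j = n - int (Suc j)" by simp
  then show ?thesis unfolding stable_term_def by (simp only: A_evol)
qed

lemma A_unstable_term: "A (n - 1) (unstable_term y (n - 1) (Suc j)) = unstable_term y n j"
proof -
  have "n - 1 + int (Suc j) = n + int j" by simp
  then show ?thesis unfolding unstable_term_def by (simp add: A_evol_back P_complement)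
qed

lemma stable_term_bound: "nrm n (stable_term y n j) \<le> D * lam ^ j * nrm (n - int j) (y (n - int j))"
  using stable_bound[of "n - int j" n] powr_real_of_nat[OF lam_pos, of j]
  by (simp add: stable_term_def)

lemma unstable_term_bound:
  "nrm n (unstable_term y n j) \<le> D * inverse mu ^ j * nrm (n + int j) (y (n + int j))"
  using unstable_bound[of n "n + int j" "y (n + int j)"] powr_real_of_minus_nat[of mu j] mu_gt_1
  by (simp add: unstable_term_def)

lemma green_solution:
  assumes stable_sums: "\<And>n. (\<lambda>j. D * lam ^ j * nrm (n - int j) (y (n - int j))) sums s n"
    and unstable_sums:
      "\<And>n. (\<lambda>j. D * inverse mu ^ Suc j * nrm (n + int (Suc j)) (y (n + int (Suc j)))) sums r n"
  obtains x where "TB A x = y" "\<And>n. nrm n (x n) \<le> s n + r n"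
proof -
  let ?u = "stable_term y" and ?v = "\<lambda>n j. unstable_term y n (Suc j)"
  have u_summable: "summable (?u n)" for n
    using equiv_norm sums_summable[OF stable_sums[of n]] stable_term_bound
    by (rule summable_equiv_norm_le)
  have v_summable: "summable (?v n)" for n
    using equiv_norm sums_summable[OF unstable_sums[of n]] unstable_term_bound
    by (rule summable_equiv_norm_le)
  define x where "x = (\<lambda>n. suminf (?u n) - suminf (?v n))"
  have "nrm n (x n) \<le> s n + r n" for n
  proof -
    have "nrm n (suminf (?u n)) \<le> s n"
      using equiv_norm_suminf_le[OF equiv_norm u_summable sums_summable[OF stable_sums[of n]]
          stable_term_bound] sums_unique[OF stable_sums[of n]] by simp
    moreover have "nrm n (suminf (?v n)) \<le> r n"
      using equiv_norm_suminf_le[OF equiv_norm v_summable sums_summable[OF unstable_sums[of n]]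
          unstable_term_bound] sums_unique[OF unstable_sums[of n]] by simp
    ultimately show ?thesis
      unfolding x_def using equiv_norm_diff_le[OF equiv_norm, of n "suminf (?u n)" "suminf (?v n)"]
      by linarith
  qed
  moreover have "TB A x n = y n" for n
  proof -
    have "A (n - 1) (x (n - 1)) = (\<Sum>j. ?u n (Suc j)) - (\<Sum>j. unstable_term y n j)"
      unfolding x_def A_diff using bounded_linear.suminf[OF A_linear u_summable]
        bounded_linear.suminf[OF A_linear v_summable] by (simp add: A_stable_term A_unstable_term)
    also have "\<dots> = (suminf (?u n) - P n (y n)) - (y n - P n (y n) + suminf (?v n))"
      using suminf_split_head[OF u_summable] suminf_split_head[of "unstable_term y n"]
        summable_Suc_iff[of "unstable_term y n"] v_summable stable_term_0 unstable_term_0 by simp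
    finally show ?thesis unfolding TB_def x_def by (simp add: algebra_simps)
  qed
  ultimately show thesis using that by blast
qed

end

lemma exp_dichotomyE:
  assumes "exp_dichotomy A nrm" "\<And>m. equiv_norm (nrm m)" "\<And>m. bounded_linear (A m)"
  obtains P D lam mu where "dichotomy A P nrm D lam mu"
proof -
  obtain P :: "int \<Rightarrow> 'a \<Rightarrow> 'a" and D lam mu where
    P: "\<forall>m. bounded_linear (P m) \<and> P m \<circ> P m = P m" "\<forall>m. A m \<circ> P m = P (m + 1) \<circ> A m"
      "\<forall>m. bij_betw (A m) {x. P m x = 0} {x. P (m + 1) x = 0}" and
    constants: "D > 0" "0 < lam" "lam < 1" "1 < mu" and
    stable: "\<forall>x n m. n \<ge> m \<longrightarrow>
      nrm n (evol A n m (P m x)) \<le> D * lam powr real_of_int (n - m) * nrm m x" and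
    unstable: "\<forall>x n m. n \<le> m \<longrightarrow>
      nrm n (evol_back A P n m (x - P m x)) \<le> D * mu powr real_of_int (n - m) * nrm m x"
    using assms(1) unfolding exp_dichotomy_def by blast
  have "dichotomy A P nrm D lam mu"
  proof (rule dichotomy.intro)
    show "P m (P m x) = P m x" "A m (P m x) = P (m + 1) (A m x)" for m x
      using P(1,2) by (metis comp_apply)+
  qed (use assms(2,3) P constants stable unstable in blast)+
  then show thesis by (rule that)
qed

context dichotomy
begin

context
  fixes B :: "(int \<Rightarrow> real) set" and nB :: "(int \<Rightarrow> real) \<Rightarrow> real"
  assumes seq_space: "admissible_seq_space B nB"
begin

interpretation admissible_seq_space B nB by (fact seq_space)

lemma TB_inj_on_YB: "inj_on (TB A) (YB B nrm)"
proof (rule inj_onI)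
  fix x x' assume x: "x \<in> YB B nrm" and x': "x' \<in> YB B nrm" and eq: "TB A x = TB A x'"
  obtain K where K: "\<And>s (m::int). s \<in> B \<Longrightarrow> \<bar>s m\<bar> \<le> K * nB s"
    using seq_pointwise_bound by blast
  define M where "M = K * nB (\<lambda>n. nrm n (x n)) + K * nB (\<lambda>n. nrm n (x' n))"
  have "nrm n (x n) \<le> M" "nrm n (x' n) \<le> M" for n
  proof -
    have "\<bar>nrm n (x n)\<bar> \<le> K * nB (\<lambda>n. nrm n (x n))" "\<bar>nrm n (x' n)\<bar> \<le> K * nB (\<lambda>n. nrm n (x' n))"
      using K[where m = n] x x' unfolding YB_def by blast+
    then show "nrm n (x n) \<le> M" "nrm n (x' n) \<le> M" unfolding M_def by linarith+
  qed
  then show "x = x'" by (rule TB_bounded_inj[OF eq])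
qed

lemma YB_subset_TB_image:
  assumes y: "y \<in> YB B nrm"
  shows "\<exists>x\<in>YB B nrm. TB A x = y"
proof -
  let ?t = "\<lambda>n. nrm n (y n)"
  have t: "?t \<in> B" using y by (simp add: YB_def)
  have inverse_mu: "0 < inverse mu" "inverse mu < 1"
    using mu_gt_1 by (auto simp: inverse_less_1_iff)
  obtain s where s: "s \<in> B" "\<And>n. (\<lambda>j. D * lam ^ j * ?t (n + - int j)) sums s n"
    using weighted_shift_series_mem[OF t, of "\<lambda>j. D * lam ^ j" "\<lambda>j. - int j"]
      D_pos lam_pos lam_less_1 by (auto intro: summable_mult summable_geometric)
  obtain r where r: "r \<in> B" "\<And>n. (\<lambda>j. D * inverse mu ^ Suc j * ?t (n + int (Suc j))) sums r n"
    using weighted_shift_series_mem[OF t, of "\<lambda>j. D * inverse mu ^ Suc j" "\<lambda>j. int (Suc j)"]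
      D_pos inverse_mu by (auto intro: summable_mult simp: summable_Suc_iff summable_geometric)
  have "(\<lambda>j. D * lam ^ j * nrm (n - int j) (y (n - int j))) sums s n" for n
    using s(2)[of n] by simp
  then obtain x where x: "TB A x = y" "\<And>n. nrm n (x n) \<le> s n + r n"
    using r(2) by (rule green_solution) blast
  have "(\<lambda>n. nrm n (x n)) \<in> B"
    using seq_add_mem[OF s(1) r(1)] equiv_norm_nonneg[OF equiv_norm] x(2) by (rule seq_dominated_mem)
  with x(1) show ?thesis unfolding YB_def by blast
qed

end

end

theorem theorem3p3:
  fixes B :: "(int \<Rightarrow> real) set" and nB :: "(int \<Rightarrow> real) \<Rightarrow> real"
    and nrm :: "int \<Rightarrow> 'a::banach \<Rightarrow> real"
    and A :: "int \<Rightarrow> 'a \<Rightarrow> 'a"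
  assumes "banach_seq_space B nB" and "admissible B nB"
    and "\<forall>m. equiv_norm (nrm m)"
    and "\<forall>m. bounded_linear (A m)"
    and "exp_dichotomy A nrm"
  shows "bij_betw (TB A) (domTB B nrm A) (YB B nrm)"
proof -
  have seq_space: "admissible_seq_space B nB"
    using assms(1,2) by (rule admissible_seq_space.intro)
  obtain P D lam mu where "dichotomy A P nrm D lam mu"
    using exp_dichotomyE assms(3-5) by blast
  then interpret dichotomy A P nrm D lam mu .
  have "inj_on (TB A) (domTB B nrm A)"
    using TB_inj_on_YB[OF seq_space] by (rule inj_on_subset) (auto simp: domTB_def)
  moreover have "TB A ` domTB B nrm A = YB B nrm"
    using YB_subset_TB_image[OF seq_space] by (fastforce simp: domTB_def)
  ultimately show ?thesis by (simp add: bij_betw_def)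
qed

end
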